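(* For all integers $n,m \geq 1$ with $n+m \geq 3$: ${\rm ML}^{\rm W}(K_{n,m})=0$ if $n \neq m$, and ${\rm ML}^{\rm W}(K_{n,m})=2n-2$ if $n=m \geq 2$.
   Context: $K_{n,m}$ is the complete bipartite graph with parts of sizes $n$ and $m$. A walk of a graph $G$ is a sequence of vertices $u_0u_1\dots u_p$ with $u_tu_{t+1}\in E(G)$ for all $t$ (vertices and edges may repeat); its length is $p$. For a walk $W$ of $G$, $G+W$ is the multigraph on $V(G)$ whose edge multiset consists of $E(G)$ together with each edge added as many times as $W$ traverses it. A multigraph is locally irregular if no two adjacent vertices have the same degree; a walk is irregularising if $G+W$ is locally irregular. ${\rm ML}^{\rm W}(G)$ denotes the minimum length of an irregularising walk of $G$, where the trivial walk consisting of a single vertex (length $0$) is allowed. *)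

theory Defs
  imports Main "HOL-Library.Extended_Nat"
begin

definition is_walk :: "'a set \<Rightarrow> ('a \<Rightarrow> 'a \<Rightarrow> bool) \<Rightarrow> 'a list \<Rightarrow> bool" where
  "is_walk V E W \<longleftrightarrow> W \<noteq> [] \<and> set W \<subseteq> V \<and>
     (\<forall>t. Suc t < length W \<longrightarrow> E (W ! t) (W ! Suc t))"

definition walk_length :: "'a list \<Rightarrow> nat" where
  "walk_length W = length W - 1"

definition walk_mult :: "'a list \<Rightarrow> 'a \<Rightarrow> 'a \<Rightarrow> nat" where
  "walk_mult W u v = card {t. Suc t < length W \<and>
      ((W ! t = u \<and> W ! Suc t = v) \<or> (W ! t = v \<and> W ! Suc t = u))}"

(* edge multiplicity of uv in the multigraph G + W *)
definition plus_mult :: "('a \<Rightarrow> 'a \<Rightarrow> bool) \<Rightarrow> 'a list \<Rightarrow> 'a \<Rightarrow> 'a \<Rightarrow> nat" where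
  "plus_mult E W u v = (if E u v then 1 else 0) + walk_mult W u v"

definition plus_deg :: "'a set \<Rightarrow> ('a \<Rightarrow> 'a \<Rightarrow> bool) \<Rightarrow> 'a list \<Rightarrow> 'a \<Rightarrow> nat" where
  "plus_deg V E W v = (\<Sum>w\<in>V. plus_mult E W v w)"

definition locally_irregular_plus :: "'a set \<Rightarrow> ('a \<Rightarrow> 'a \<Rightarrow> bool) \<Rightarrow> 'a list \<Rightarrow> bool" where
  "locally_irregular_plus V E W \<longleftrightarrow>
     (\<forall>u\<in>V. \<forall>v\<in>V. plus_mult E W u v > 0 \<longrightarrow> plus_deg V E W u \<noteq> plus_deg V E W v)"

definition irregularising :: "'a set \<Rightarrow> ('a \<Rightarrow> 'a \<Rightarrow> bool) \<Rightarrow> 'a list \<Rightarrow> bool" where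
  "irregularising V E W \<longleftrightarrow> is_walk V E W \<and> locally_irregular_plus V E W"

(* ML^W(G): minimum length of an irregularising walk (infinity if none exists) *)
definition minlen_irr_walk :: "'a set \<Rightarrow> ('a \<Rightarrow> 'a \<Rightarrow> bool) \<Rightarrow> enat" where
  "minlen_irr_walk V E = Inf {enat (walk_length W) | W. irregularising V E W}"

(* complete bipartite graph K_{n,m}: parts Inl ` {..<n} and Inr ` {..<m} *)
definition KV :: "nat \<Rightarrow> nat \<Rightarrow> (nat + nat) set" where
  "KV n m = Inl ` {..<n} \<union> Inr ` {..<m}"

definition KE :: "nat \<Rightarrow> nat \<Rightarrow> (nat + nat) \<Rightarrow> (nat + nat) \<Rightarrow> bool" where
  "KE n m x y \<longleftrightarrow> x \<in> KV n m \<and> y \<in> KV n m \<and> isl x \<noteq> isl y"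

end

theory Submission
  imports Defs
begin

text \<open>Write d(v) for the number of steps of a walk W having v as an end. In K(n,m) the degree of
  v in G + W is its degree in G plus d(v), so W is irregularising iff m + d(a) and n + d(b)
  differ for every left vertex a and right vertex b. For n different from m the trivial walk
  already works. For n = m, two vertices on opposite sides that W misses would have equal
  degree, so W covers a whole side. Every step of W has exactly one end on that side, and every
  vertex met by W is the end of at least two steps unless it is an end of W itself; hence
  2n is at most the length of W plus 2. The bound is attained by the walk that runs through all
  left vertices, returning each time to one fixed right vertex.\<close>

definition walk_deg :: "'a list \<Rightarrow> 'a \<Rightarrow> nat" where
  "walk_deg W v = (\<Sum>t<length W - 1. (if W ! t = v then 1 else 0) + (if W ! Suc t = v then 1 else 0))"

lemma card_steps_eq_sum:
  "card {t. Suc t < length W \<and> P t} = (\<Sum>t<length W - 1. if P t then 1 else 0)"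
proof -
  have "{t. Suc t < length W \<and> P t} = {t \<in> {..<length W - 1}. P t}" by auto
  then show ?thesis by (simp add: sum.inter_filter[symmetric])
qed

lemma is_walk_step: "is_walk V E W \<Longrightarrow> Suc t < length W \<Longrightarrow> E (W ! t) (W ! Suc t)"
  unfolding is_walk_def by auto

lemma is_walk_nth_in: "is_walk V E W \<Longrightarrow> t < length W \<Longrightarrow> W ! t \<in> V"
  unfolding is_walk_def by auto

lemma sum_walk_mult_eq_walk_deg:
  assumes W: "is_walk V E W" and "finite V" and loopfree: "\<And>v. \<not> E v v"
  shows "(\<Sum>w\<in>V. walk_mult W v w) = walk_deg W v"
proof -
  let ?step = "\<lambda>t w. (W ! t = v \<and> W ! Suc t = w) \<or> (W ! t = w \<and> W ! Suc t = v)"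
  have "(\<Sum>w\<in>V. walk_mult W v w) = (\<Sum>w\<in>V. \<Sum>t<length W - 1. if ?step t w then 1 else 0)"
    unfolding walk_mult_def card_steps_eq_sum by simp
  also have "\<dots> = (\<Sum>t<length W - 1. \<Sum>w\<in>V. if ?step t w then 1 else 0)"
    by (rule sum.swap)
  also have "\<dots> = walk_deg W v"
    unfolding walk_deg_def
  proof (rule sum.cong)
    fix t assume "t \<in> {..<length W - 1}"
    then have t: "Suc t < length W" by auto
    have distinct: "W ! t \<noteq> W ! Suc t"
      using is_walk_step[OF W t] loopfree by metis
    show "(\<Sum>w\<in>V. if ?step t w then 1 else 0) =
        (if W ! t = v then 1 else 0) + (if W ! Suc t = v then 1 else 0)"
    proof (cases "W ! t = v")
      case True
      then have "?step t w \<longleftrightarrow> w = W ! Suc t" for w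
        using distinct by auto
      then show ?thesis
        using True distinct \<open>finite V\<close> is_walk_nth_in[OF W t] by (simp add: sum.delta')
    next
      case False
      then have "?step t w \<longleftrightarrow> w = W ! t \<and> W ! Suc t = v" for w
        by auto
      then show ?thesis
        using False \<open>finite V\<close> is_walk_nth_in[OF W] t by (simp add: sum.delta')
    qed
  qed simp
  finally show ?thesis .
qed

lemma plus_deg_eq:
  assumes "is_walk V E W" and "finite V" and "\<And>v. \<not> E v v"
  shows "plus_deg V E W v = card {w \<in> V. E v w} + walk_deg W v"
proof -
  have "plus_deg V E W v = (\<Sum>w\<in>V. if E v w then 1 else 0) + (\<Sum>w\<in>V. walk_mult W v w)"
    unfolding plus_deg_def plus_mult_def by (simp add: sum.distrib)
  then show ?thesis
    using sum_walk_mult_eq_walk_deg[OF assms] \<open>finite V\<close> by (simp add: sum.inter_filter[symmetric])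
qed

lemma walk_mult_pos_imp_edge:
  assumes W: "is_walk V E W" and "symp E" and "walk_mult W u v > 0"
  shows "E u v"
proof -
  from \<open>walk_mult W u v > 0\<close> obtain t where "Suc t < length W"
      and "(W ! t = u \<and> W ! Suc t = v) \<or> (W ! t = v \<and> W ! Suc t = u)"
    unfolding walk_mult_def by (auto dest!: card_gt_0_iff[THEN iffD1])
  then show ?thesis using is_walk_step[OF W] \<open>symp E\<close> by (metis sympD)
qed

lemma locally_irregular_plus_iff:
  assumes "is_walk V E W" and "symp E"
  shows "locally_irregular_plus V E W \<longleftrightarrow>
    (\<forall>u\<in>V. \<forall>v\<in>V. E u v \<longrightarrow> plus_deg V E W u \<noteq> plus_deg V E W v)"
proof -
  have "plus_mult E W u v > 0 \<longleftrightarrow> E u v" for u v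
    using walk_mult_pos_imp_edge[OF assms, of u v] unfolding plus_mult_def by auto
  then show ?thesis unfolding locally_irregular_plus_def by simp
qed

lemma finite_KV: "finite (KV n m)"
  unfolding KV_def by simp

lemma symp_KE: "symp (KE n m)"
  unfolding KE_def by (auto intro: sympI)

lemma KE_irrefl: "\<not> KE n m v v"
  unfolding KE_def by simp

lemma card_KE_neighbours:
  assumes "v \<in> KV n m"
  shows "card {w \<in> KV n m. KE n m v w} = (if isl v then m else n)"
proof -
  have "{w \<in> KV n m. KE n m v w} = (if isl v then Inr ` {..<m} else Inl ` {..<n})"
    using assms unfolding KE_def KV_def by auto
  then show ?thesis by (simp add: card_image)
qed

lemma irregularising_KE_iff:
  assumes W: "is_walk (KV n m) (KE n m) W"
  shows "irregularising (KV n m) (KE n m) W \<longleftrightarrow>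
    (\<forall>i<n. \<forall>j<m. m + walk_deg W (Inl i) \<noteq> n + walk_deg W (Inr j))"
proof -
  have deg: "plus_deg (KV n m) (KE n m) W v = (if isl v then m else n) + walk_deg W v"
    if "v \<in> KV n m" for v
    using plus_deg_eq[OF W finite_KV KE_irrefl] card_KE_neighbours[OF that] by simp
  have "(\<forall>u\<in>KV n m. \<forall>v\<in>KV n m. KE n m u v \<longrightarrow>
          plus_deg (KV n m) (KE n m) W u \<noteq> plus_deg (KV n m) (KE n m) W v) \<longleftrightarrow>
        (\<forall>i<n. \<forall>j<m. m + walk_deg W (Inl i) \<noteq> n + walk_deg W (Inr j))"
  proof (intro iffI allI impI ballI)
    fix i j assume "i < n" "j < m" and
      irr: "\<forall>u\<in>KV n m. \<forall>v\<in>KV n m. KE n m u v \<longrightarrow>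
          plus_deg (KV n m) (KE n m) W u \<noteq> plus_deg (KV n m) (KE n m) W v"
    then have "Inl i \<in> KV n m" "Inr j \<in> KV n m" unfolding KV_def by auto
    with irr show "m + walk_deg W (Inl i) \<noteq> n + walk_deg W (Inr j)"
      using deg unfolding KE_def by fastforce
  next
    fix u v assume "u \<in> KV n m" "v \<in> KV n m" "KE n m u v" and
      irr: "\<forall>i<n. \<forall>j<m. m + walk_deg W (Inl i) \<noteq> n + walk_deg W (Inr j)"
    then consider i j where "i < n" "j < m" "u = Inl i" "v = Inr j"
      | i j where "i < n" "j < m" "u = Inr j" "v = Inl i"
      unfolding KE_def KV_def by auto
    then show "plus_deg (KV n m) (KE n m) W u \<noteq> plus_deg (KV n m) (KE n m) W v"
      by cases (use irr deg \<open>u \<in> KV n m\<close> \<open>v \<in> KV n m\<close> in \<open>fastforce+\<close>)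
  qed
  then show ?thesis
    using W locally_irregular_plus_iff[OF W symp_KE] unfolding irregularising_def by simp
qed

lemma walk_deg_eq_0: "v \<notin> set W \<Longrightarrow> walk_deg W v = 0"
  unfolding walk_deg_def by (auto intro!: sum.neutral)

lemma walk_deg_ge_2:
  assumes "v \<in> set W"
  shows "2 \<le> walk_deg W v + (if hd W = v then 1 else 0) + (if last W = v then 1 else 0)"
proof -
  obtain i where i: "i < length W" "W ! i = v"
    using assms by (meson in_set_conv_nth)
  let ?out = "\<lambda>t. (if W ! t = v then 1 else 0) :: nat"
  let ?into = "\<lambda>t. (if W ! Suc t = v then 1 else 0) :: nat"
  have deg: "walk_deg W v = sum ?out {..<length W - 1} + sum ?into {..<length W - 1}"
    unfolding walk_deg_def by (simp add: sum.distrib)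
  have "i = length W - 1 \<or> 1 \<le> sum ?out {..<length W - 1}"
    using i member_le_sum[of i "{..<length W - 1}" ?out] by force
  moreover have "i = 0 \<or> 1 \<le> sum ?into {..<length W - 1}"
    using i member_le_sum[of "i - 1" "{..<length W - 1}" ?into] by (cases i) auto
  moreover have "i = 0 \<Longrightarrow> hd W = v"
    using i by (simp add: hd_conv_nth)
  moreover have "i = length W - 1 \<Longrightarrow> last W = v"
    using i last_conv_nth[of W] by fastforce
  ultimately show ?thesis
    using deg by auto
qed

lemma sum_walk_deg_alternating:
  assumes "finite S" and alternating: "\<And>t. Suc t < length W \<Longrightarrow> (W ! t \<in> S) \<noteq> (W ! Suc t \<in> S)"
  shows "(\<Sum>v\<in>S. walk_deg W v) = walk_length W"
proof -
  have "(\<Sum>v\<in>S. walk_deg W v) =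
      (\<Sum>t<length W - 1. \<Sum>v\<in>S. (if W ! t = v then 1 else 0) + (if W ! Suc t = v then 1 else 0))"
    unfolding walk_deg_def by (rule sum.swap)
  also have "\<dots> = (\<Sum>t<length W - 1. 1)"
  proof (rule sum.cong)
    fix t assume "t \<in> {..<length W - 1}"
    then have "(W ! t \<in> S) \<noteq> (W ! Suc t \<in> S)"
      using alternating by simp
    then show "(\<Sum>v\<in>S. (if W ! t = v then 1 else 0) + (if W ! Suc t = v then 1 else 0)) = 1"
      using \<open>finite S\<close> by (simp add: sum.distrib sum.delta)
  qed simp
  finally show ?thesis
    unfolding walk_length_def by simp
qed

lemma card_covered_alternating_le:
  assumes "finite S" and "S \<subseteq> set W"
    and "\<And>t. Suc t < length W \<Longrightarrow> (W ! t \<in> S) \<noteq> (W ! Suc t \<in> S)"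
  shows "2 * card S \<le> walk_length W + 2"
proof -
  have "2 * card S = (\<Sum>v\<in>S. 2)"
    by simp
  also have "\<dots> \<le> (\<Sum>v\<in>S. walk_deg W v + (if hd W = v then 1 else 0) + (if last W = v then 1 else 0))"
    using \<open>S \<subseteq> set W\<close> by (intro sum_mono walk_deg_ge_2) blast
  also have "\<dots> = walk_length W + (if hd W \<in> S then 1 else 0) + (if last W \<in> S then 1 else 0)"
    using assms by (simp add: sum.distrib sum.delta sum_walk_deg_alternating)
  also have "\<dots> \<le> walk_length W + 2"
    by simp
  finally show ?thesis .
qed

lemma walk_length_ge_if_irregularising_KE:
  assumes "irregularising (KV n n) (KE n n) W"
  shows "2 * n - 2 \<le> walk_length W"
proof -
  have W: "is_walk (KV n n) (KE n n) W"
    using assms unfolding irregularising_def by simp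
  have side_covered: "Inl ` {..<n} \<subseteq> set W \<or> Inr ` {..<n} \<subseteq> set W"
  proof (rule ccontr)
    assume "\<not> ?thesis"
    then obtain i j where "i < n" "j < n" "Inl i \<notin> set W" "Inr j \<notin> set W"
      by auto
    then show False
      using assms irregularising_KE_iff[OF W] walk_deg_eq_0 by metis
  qed
  have step: "isl (W ! t) \<noteq> isl (W ! Suc t) \<and> W ! t \<in> KV n n \<and> W ! Suc t \<in> KV n n"
    if "Suc t < length W" for t
    using is_walk_step[OF W that] unfolding KE_def by blast
  have "x \<in> KV n n \<Longrightarrow> x \<in> Inl ` {..<n} \<longleftrightarrow> isl x"
    and "x \<in> KV n n \<Longrightarrow> x \<in> Inr ` {..<n} \<longleftrightarrow> \<not> isl x" for x :: "nat + nat"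
    unfolding KV_def by auto
  with step have "2 * card (Inl ` {..<n} :: (nat + nat) set) \<le> walk_length W + 2 \<or>
      2 * card (Inr ` {..<n} :: (nat + nat) set) \<le> walk_length W + 2"
    using side_covered card_covered_alternating_le[of "Inl ` {..<n}" W]
      card_covered_alternating_le[of "Inr ` {..<n}" W] by auto
  then show ?thesis
    by (simp add: card_image)
qed

definition hub_walk :: "nat \<Rightarrow> (nat + nat) list" where
  "hub_walk n = map (\<lambda>k. if even k then Inl (k div 2) else Inr 0) [0..<2 * n - 1]"

lemma walk_length_hub_walk: "walk_length (hub_walk n) = 2 * n - 2"
  unfolding hub_walk_def walk_length_def by simp

lemma walk_deg_hub_walk:
  assumes "n \<ge> 1"
  shows "walk_deg (hub_walk n) v =
    (\<Sum>t<2 * n - 2. (if (if even t then Inl (t div 2) else Inr 0) = v then 1 else 0) +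
       (if (if odd t then Inl (Suc t div 2) else Inr 0) = v then 1 else 0))"
  unfolding walk_deg_def hub_walk_def using assms by (intro sum.cong) auto

lemma walk_deg_hub_walk_Inl:
  assumes "i < n"
  shows "walk_deg (hub_walk n) (Inl i) = (if i < n - 1 then 1 else 0) + (if 0 < i then 1 else 0)"
proof -
  have out: "(if even t then Inl (t div 2) else Inr 0) = Inl i \<longleftrightarrow> t = 2 * i" for t :: nat
    by auto
  have into: "(if odd t then Inl (Suc t div 2) else Inr 0) = Inl i \<longleftrightarrow> Suc t = 2 * i"
    for t :: nat
    by (auto; presburger)
  have "walk_deg (hub_walk n) (Inl i) =
      (\<Sum>t<2 * n - 2. if t = 2 * i then 1 else 0) + (\<Sum>t<2 * n - 2. if Suc t = 2 * i then 1 else 0)"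
    using assms by (simp add: walk_deg_hub_walk out into sum.distrib)
  also have "(\<Sum>t<2 * n - 2. if Suc t = 2 * i then 1 else 0) = (if 0 < i then 1 else 0)"
    using assms by (cases i) (auto simp: sum.delta')
  finally show ?thesis
    using assms by (auto simp: sum.delta')
qed

lemma walk_deg_hub_walk_hub:
  assumes "n \<ge> 1"
  shows "walk_deg (hub_walk n) (Inr 0) = 2 * n - 2"
proof -
  have step_count: "(if (if even t then Inl (t div 2) else Inr 0) = Inr 0 then 1 else 0) +
      (if (if odd t then Inl (Suc t div 2) else Inr 0) = Inr 0 then 1 else 0) = (1::nat)" for t :: nat
    by auto
  show ?thesis
    unfolding walk_deg_hub_walk[OF assms] step_count by simp
qed

lemma walk_deg_hub_walk_Inr:
  assumes "n \<ge> 1" and "j > 0"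
  shows "walk_deg (hub_walk n) (Inr j) = 0"
  using assms by (simp add: walk_deg_hub_walk)

lemma irregularising_hub_walk:
  assumes "n \<ge> 2"
  shows "irregularising (KV n n) (KE n n) (hub_walk n)"
proof -
  have "is_walk (KV n n) (KE n n) (hub_walk n)"
    using assms unfolding is_walk_def hub_walk_def KE_def KV_def by auto
  moreover have "walk_deg (hub_walk n) (Inl i) \<noteq> walk_deg (hub_walk n) (Inr j)"
    if "i < n" "j < n" for i j
    using assms that walk_deg_hub_walk_Inl walk_deg_hub_walk_hub walk_deg_hub_walk_Inr
    by (cases "j = 0") auto
  ultimately show ?thesis
    using irregularising_KE_iff by auto
qed

lemma minlen_irr_walk_eqI:
  assumes "irregularising V E W" and "walk_length W = k"
    and "\<And>W'. irregularising V E W' \<Longrightarrow> k \<le> walk_length W'"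
  shows "minlen_irr_walk V E = enat k"
  unfolding minlen_irr_walk_def
proof (rule antisym)
  show "Inf {enat (walk_length W) |W. irregularising V E W} \<le> enat k"
    using assms(1,2) by (intro Inf_lower) auto
  show "enat k \<le> Inf {enat (walk_length W) |W. irregularising V E W}"
    using assms(3) by (auto intro!: Inf_greatest)
qed

theorem theorem5p2:
  fixes n m :: nat
  assumes "n \<ge> 1" and "m \<ge> 1" and "n + m \<ge> 3"
  shows "(n \<noteq> m \<longrightarrow> minlen_irr_walk (KV n m) (KE n m) = 0) \<and>
         (n = m \<and> n \<ge> 2 \<longrightarrow> minlen_irr_walk (KV n m) (KE n m) = enat (2 * n - 2))"
proof (intro conjI impI)
  assume "n \<noteq> m"
  have "is_walk (KV n m) (KE n m) [Inl 0]"
    using \<open>n \<ge> 1\<close> unfolding is_walk_def KV_def by auto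
  then have "irregularising (KV n m) (KE n m) [Inl 0]"
    using \<open>n \<noteq> m\<close> by (simp add: irregularising_KE_iff walk_deg_def)
  then show "minlen_irr_walk (KV n m) (KE n m) = 0"
    using minlen_irr_walk_eqI[of _ _ "[Inl 0]" 0] by (simp add: walk_length_def zero_enat_def)
next
  assume "n = m \<and> n \<ge> 2"
  then show "minlen_irr_walk (KV n m) (KE n m) = enat (2 * n - 2)"
    using minlen_irr_walk_eqI[OF irregularising_hub_walk walk_length_hub_walk]
      walk_length_ge_if_irregularising_KE by auto
qed

end
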